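(* Let $n,d,c\in\mathbb{N}$ with $d\ge 50$ and $c\in[d]$, let $\mathcal{F}\subseteq 2^{[n]}$ be a hereditary family with $\delta(\mathcal{F})\ge 2^{d-1}-c+1$, and let $P$ be an isolated pile of $\mathcal{F}$ with $\sum_{x\in P}\omega_{\mathcal{F}}(x)<2^d-c$. Then: (a) $t\ge c$; (b) $t\le 2c-2$; (c) for every $x\in P$, $d_{\mathcal{G}}(x)\ge 2^{d-1}-2c+2$; (d) if $x\in P$ is a bad vertex, then $\{x\}\in\mathcal{N}$; (e) $P$ contains at most $\frac d2-1$ good vertices.
   Context: A family is hereditary if it is closed under taking subsets. $d_{\mathcal{F}}(x)=|\{F\in\mathcal{F}:x\in F\}|$, $\delta(\mathcal{F})=\min_x d_{\mathcal{F}}(x)$, $N(x)=\bigcup_{x\in F\in\mathcal{F}}F$. The weight of $x$ is $\omega_{\mathcal{F}}(x)=\sum_{x\in F\in\mathcal{F}}\frac{1}{|F|}$. A vertex $x$ is good if $|N(x)|\ge d+1$ and bad if $|N(x)|=d$. A set $P\subseteq[n]$ with $|P|=d$ is a pile of $\mathcal{F}$ if $P\subseteq N(y)$ for every $y\in P$, and there exists $z\in P$ with $N(z)=P$; a pile is isolated if it is disjoint from every other pile. Given the pile $P$, let $\mathcal{G}=\{S\subseteq P: S\in\mathcal{F}\}$, $d_{\mathcal{G}}(x)=|\{S\in\mathcal{G}:x\in S\}|$, $t=2^d-|\mathcal{G}|$, $\mathcal{M}=2^{P}\setminus\mathcal{G}$, and $\mathcal{N}=\{P\setminus M: M\in\mathcal{M}\}$.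 *)

theory Defs
  imports Complex_Main
begin

definition hereditary :: "'a set set \<Rightarrow> bool" where
  "hereditary F \<longleftrightarrow> (\<forall>A\<in>F. \<forall>B. B \<subseteq> A \<longrightarrow> B \<in> F)"

definition deg :: "'a set set \<Rightarrow> 'a \<Rightarrow> nat" where
  "deg F x = card {A\<in>F. x \<in> A}"

definition min_deg :: "nat \<Rightarrow> nat set set \<Rightarrow> nat" where
  "min_deg n F = Min ((deg F) ` {1..n})"

definition nbhd :: "'a set set \<Rightarrow> 'a \<Rightarrow> 'a set" where
  "nbhd F x = \<Union>{A\<in>F. x \<in> A}"

definition weight :: "'a set set \<Rightarrow> 'a \<Rightarrow> real" where
  "weight F x = (\<Sum>A\<in>{A\<in>F. x \<in> A}. 1 / real (card A))"

definition good :: "nat \<Rightarrow> 'a set set \<Rightarrow> 'a \<Rightarrow> bool" where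
  "good d F x \<longleftrightarrow> card (nbhd F x) \<ge> d + 1"

definition bad :: "nat \<Rightarrow> 'a set set \<Rightarrow> 'a \<Rightarrow> bool" where
  "bad d F x \<longleftrightarrow> card (nbhd F x) = d"

definition pile :: "nat \<Rightarrow> nat \<Rightarrow> nat set set \<Rightarrow> nat set \<Rightarrow> bool" where
  "pile n d F P \<longleftrightarrow> P \<subseteq> {1..n} \<and> card P = d \<and> (\<forall>y\<in>P. P \<subseteq> nbhd F y)
     \<and> (\<exists>z\<in>P. nbhd F z = P)"

definition isolated_pile :: "nat \<Rightarrow> nat \<Rightarrow> nat set set \<Rightarrow> nat set \<Rightarrow> bool" where
  "isolated_pile n d F P \<longleftrightarrow> pile n d F P \<and>
     (\<forall>Q. pile n d F Q \<and> Q \<noteq> P \<longrightarrow> P \<inter> Q = {})"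

definition pileG :: "'a set set \<Rightarrow> 'a set \<Rightarrow> 'a set set" where
  "pileG F P = {S. S \<subseteq> P \<and> S \<in> F}"

definition pile_t :: "nat \<Rightarrow> 'a set set \<Rightarrow> 'a set \<Rightarrow> int" where
  "pile_t d F P = 2 ^ d - int (card (pileG F P))"

definition pileM :: "'a set set \<Rightarrow> 'a set \<Rightarrow> 'a set set" where
  "pileM F P = Pow P - pileG F P"

definition pileN :: "'a set set \<Rightarrow> 'a set \<Rightarrow> 'a set set" where
  "pileN F P = (\<lambda>M. P - M) ` pileM F P"

end

theory Submission
  imports Defs
begin

text \<open>
  Let \<open>t\<close> be the number of subsets of \<open>P\<close> missing from \<open>F\<close>. Summing the weights set by set,
  every nonempty member of \<open>F\<close> inside \<open>P\<close> contributes \<open>1\<close> and every member \<open>A\<close> crossing the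
  boundary of \<open>P\<close> contributes \<open>|A \<inter> P| / |A|\<close>; so the weight hypothesis bounds this crossing
  weight by \<open>t - c + 1\<close>, and in particular \<open>t \<ge> c\<close>. The sets through a vertex \<open>z\<close> with
  \<open>N(z) = P\<close>, together with their traces without \<open>z\<close>, lie in \<open>P\<close>, so \<open>2 d(z) \<le> 2^d - t\<close>
  and \<open>t \<le> 2c - 2\<close>; (c) and (d) are the same count at other vertices.
  For (e): a good vertex lies on an edge leaving \<open>P\<close>, of share \<open>1/2\<close>. As \<open>t\<close> and the
  crossing weight are small, hereditarity forces every missing set to have at least \<open>7d/8\<close>
  elements and every crossing set at most \<open>d/4\<close>; double counting incidences on \<open>P\<close> then gives
  \<open>7t/8 \<le> c - 1 + (crossing weight)/4\<close>, leaving room for fewer than \<open>d/2 - 1\<close> good vertices.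
\<close>

lemma sixteen_mult_le_two_power: "7 \<le> s \<Longrightarrow> 16 * s \<le> (2::nat) ^ s"
  by (induction s rule: dec_induct) simp_all

lemma four_mult_square_le_two_power: "13 \<le> r \<Longrightarrow> 4 * r * r \<le> (2::nat) ^ (r - 2)"
proof (induction r rule: dec_induct)
  case (step m)
  have "13 * m \<le> m * m" using step(1) by (rule mult_right_mono) simp
  moreover have "4 * Suc m * Suc m = 4 * (m * m) + 8 * m + 4" "2 * (4 * m * m) = 8 * (m * m)"
    by (simp_all add: algebra_simps)
  ultimately have "4 * Suc m * Suc m \<le> 2 * (4 * m * m)" using step(1) by linarith
  also have "\<dots> \<le> 2 * 2 ^ (m - 2)" using step by simp
  also have "\<dots> = 2 ^ (Suc m - 2)" using step(1) by (simp add: Suc_diff_le flip: power_Suc)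
  finally show ?case .
qed simp

lemma eight_mult_le_of_two_power_less:
  assumes "2 ^ s < 2 * d" "50 \<le> d"
  shows "8 * s \<le> (d::nat)"
proof (rule ccontr)
  assume "\<not> 8 * s \<le> d"
  then have "16 * s \<le> 2 ^ s" using assms(2) by (intro sixteen_mult_le_two_power) linarith
  then show False using assms \<open>\<not> 8 * s \<le> d\<close> by linarith
qed

lemma four_mult_le_of_two_power_less:
  assumes "2 ^ (r - 2) < r * d" "50 \<le> d"
  shows "4 * r \<le> (d::nat)"
proof (rule ccontr)
  assume "\<not> 4 * r \<le> d"
  then have "4 * r * r \<le> 2 ^ (r - 2)" using assms(2) by (intro four_mult_square_le_two_power) linarith
  moreover have "r * d \<le> r * (4 * r)" using \<open>\<not> 4 * r \<le> d\<close> by simp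
  ultimately show False using assms(1) by linarith
qed

lemma deg_Pow:
  assumes "finite P" "x \<in> P"
  shows "deg (Pow P) x = 2 ^ (card P - 1)"
proof -
  have "{A \<in> Pow P. x \<in> A} = insert x ` Pow (P - {x})"
  proof
    show "{A \<in> Pow P. x \<in> A} \<subseteq> insert x ` Pow (P - {x})"
    proof
      fix A assume "A \<in> {A \<in> Pow P. x \<in> A}"
      then have "A = insert x (A - {x})" "A - {x} \<in> Pow (P - {x})" by auto
      then show "A \<in> insert x ` Pow (P - {x})" by (rule image_eqI)
    qed
    show "insert x ` Pow (P - {x}) \<subseteq> {A \<in> Pow P. x \<in> A}" using assms(2) by auto
  qed
  moreover have "inj_on (insert x) (Pow (P - {x}))"
    by (rule inj_onI) (simp add: insert_ident subset_Diff_insert)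
  ultimately show ?thesis
    using assms by (simp add: deg_def card_image card_Pow)
qed

lemma sum_incidences_eq:
  fixes f :: "'a set \<Rightarrow> 'b::comm_semiring_1"
  assumes "finite P" "finite \<A>"
  shows "(\<Sum>x\<in>P. \<Sum>A\<in>{A\<in>\<A>. x \<in> A}. f A) = (\<Sum>A\<in>\<A>. of_nat (card (A \<inter> P)) * f A)"
proof -
  have "(\<Sum>x\<in>P. \<Sum>A\<in>{A\<in>\<A>. x \<in> A}. f A) = (\<Sum>A\<in>\<A>. \<Sum>x\<in>P. if x \<in> A then f A else 0)"
    using assms by (simp add: sum.inter_filter sum.swap[of _ P])
  also have "\<dots> = (\<Sum>A\<in>\<A>. of_nat (card (A \<inter> P)) * f A)"
    using assms(1) by (simp add: sum.If_cases Int_commute)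
  finally show ?thesis .
qed

lemma sum_deg_eq:
  assumes "finite P" "finite \<A>"
  shows "(\<Sum>x\<in>P. deg \<A> x) = (\<Sum>A\<in>\<A>. card (A \<inter> P))"
  using sum_incidences_eq[OF assms, of "\<lambda>_. 1::nat"] by (simp add: deg_def)

lemma deg_Un_disjoint:
  assumes "finite \<A>" "finite \<B>" "\<A> \<inter> \<B> = {}"
  shows "deg (\<A> \<union> \<B>) x = deg \<A> x + deg \<B> x"
proof -
  have "{A \<in> \<A> \<union> \<B>. x \<in> A} = {A \<in> \<A>. x \<in> A} \<union> {A \<in> \<B>. x \<in> A}" by blast
  then show ?thesis using assms unfolding deg_def by (simp add: card_Un_disjoint disjoint_iff)
qed

lemma hereditaryD: "hereditary F \<Longrightarrow> A \<in> F \<Longrightarrow> B \<subseteq> A \<Longrightarrow> B \<in> F"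
  by (auto simp: hereditary_def)

definition share :: "'a set \<Rightarrow> 'a set \<Rightarrow> real" where
  "share P A = real (card (A \<inter> P)) / real (card A)"

definition crossing :: "'a set set \<Rightarrow> 'a set \<Rightarrow> 'a set set" where
  "crossing F P = {A \<in> F. \<not> A \<subseteq> P \<and> A \<inter> P \<noteq> {}}"

definition crossing_weight :: "'a set set \<Rightarrow> 'a set \<Rightarrow> real" where
  "crossing_weight F P = (\<Sum>A\<in>crossing F P. share P A)"

lemma share_nonneg: "0 \<le> share P A"
  by (simp add: share_def)

lemma crossing_weight_nonneg: "0 \<le> crossing_weight F P"
  by (simp add: crossing_weight_def share_nonneg sum_nonneg)

lemma card_pileG_plus_card_pileM:
  assumes "finite P"
  shows "card (pileG F P) + card (pileM F P) = 2 ^ card P"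
proof -
  have "pileG F P \<subseteq> Pow P" by (auto simp: pileG_def)
  moreover from this have "card (pileG F P) \<le> 2 ^ card P"
    using assms by (metis card_Pow card_mono finite_Pow_iff)
  ultimately show ?thesis
    using assms by (simp add: pileM_def card_Diff_subset card_Pow finite_subset)
qed

lemma deg_pileG_plus_deg_pileM:
  assumes "finite P" "x \<in> P"
  shows "deg (pileG F P) x + deg (pileM F P) x = 2 ^ (card P - 1)"
proof -
  have "Pow P = pileG F P \<union> pileM F P" by (auto simp: pileG_def pileM_def)
  moreover have "pileG F P \<inter> pileM F P = {}" by (auto simp: pileM_def)
  moreover have "finite (pileG F P)" "finite (pileM F P)"
    using assms(1) by (auto simp: pileG_def pileM_def intro: finite_subset)
  ultimately show ?thesis using deg_Pow[OF assms] deg_Un_disjoint by metis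
qed

lemma deg_eq_deg_pileG_plus_deg_crossing:
  assumes "finite F" "x \<in> P"
  shows "deg F x = deg (pileG F P) x + deg (crossing F P) x"
proof -
  have "{A \<in> F. x \<in> A} = {A \<in> pileG F P \<union> crossing F P. x \<in> A}"
    using assms(2) by (auto simp: pileG_def crossing_def)
  then have "deg F x = deg (pileG F P \<union> crossing F P) x" by (simp add: deg_def)
  also have "\<dots> = deg (pileG F P) x + deg (crossing F P) x"
    using assms(1) by (intro deg_Un_disjoint) (auto simp: pileG_def crossing_def)
  finally show ?thesis .
qed

lemma sum_weight_eq:
  assumes "finite P" "finite F"
  shows "(\<Sum>x\<in>P. weight F x) = (\<Sum>A\<in>F. share P A)"
  using sum_incidences_eq[OF assms, of "\<lambda>A. 1 / real (card A)"]
  by (simp add: weight_def share_def)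

lemma sum_weight_ge:
  assumes "finite P" "finite F"
  shows "real (card (pileG F P)) - 1 + crossing_weight F P \<le> (\<Sum>x\<in>P. weight F x)"
proof -
  let ?G = "pileG F P - {{}}" \<comment> \<open>the empty set has share \<open>0 / 0 = 0\<close>, hence the \<open>- 1\<close>\<close>
  have finite_G: "finite ?G" using assms(1) by (auto simp: pileG_def intro: finite_subset)
  have "card (pileG F P) \<le> Suc (card ?G)"
    using finite_G card_Diff_singleton_if[of "pileG F P" "{}"] by auto
  moreover have "(\<Sum>A\<in>?G. share P A) = real (card ?G)"
  proof -
    have "share P A = 1" if "A \<in> ?G" for A
      using that assms(1) finite_subset[of A P]
      by (auto simp: share_def pileG_def Int_absorb2 card_eq_0_iff)
    then show ?thesis by simp
  qed
  moreover have "(\<Sum>A\<in>?G \<union> crossing F P. share P A) \<le> (\<Sum>A\<in>F. share P A)"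
    using assms(2) by (intro sum_mono2) (auto simp: pileG_def crossing_def share_nonneg)
  moreover have "(\<Sum>A\<in>?G \<union> crossing F P. share P A) = (\<Sum>A\<in>?G. share P A) + crossing_weight F P"
    using finite_G assms(2) unfolding crossing_weight_def
    by (intro sum.union_disjoint) (auto simp: pileG_def crossing_def)
  ultimately show ?thesis using sum_weight_eq[OF assms] by linarith
qed

lemma two_mult_deg_le_card_pileG:
  assumes "hereditary F" "finite P" "nbhd F z = P"
  shows "2 * deg F z \<le> card (pileG F P)"
proof -
  let ?D = "{A \<in> F. z \<in> A}" and ?D' = "(\<lambda>A. A - {z}) ` {A \<in> F. z \<in> A}"
  have D: "?D \<subseteq> pileG F P" using assms(3) by (auto simp: pileG_def nbhd_def)
  moreover have "?D' \<subseteq> pileG F P"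
    using D assms(1) by (auto simp: pileG_def intro: hereditaryD)
  moreover have finite_G: "finite (pileG F P)"
    using assms(2) by (auto simp: pileG_def intro: finite_subset)
  ultimately have "card (?D \<union> ?D') \<le> card (pileG F P)" by (intro card_mono) auto
  moreover have "inj_on (\<lambda>A. A - {z}) ?D"
    by (rule inj_onI) (metis insert_Diff mem_Collect_eq)
  moreover have "finite ?D" using D finite_G finite_subset by blast
  ultimately show ?thesis
    by (subst (asm) card_Un_disjoint) (auto simp: deg_def card_image)
qed

lemma card_pileG_ge_of_compl_mem:
  assumes "hereditary F" "finite P" "x \<in> P" "nbhd F x = P" "P - {x} \<in> F"
  shows "2 ^ (card P - 1) + deg F x \<le> card (pileG F P)"
proof -
  let ?D = "{A \<in> F. x \<in> A}"
  have "?D \<subseteq> pileG F P" using assms(4) by (auto simp: pileG_def nbhd_def)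
  moreover have "Pow (P - {x}) \<subseteq> pileG F P"
    using assms(1,5) by (auto simp: pileG_def intro: hereditaryD)
  moreover have finite_G: "finite (pileG F P)"
    using assms(2) by (auto simp: pileG_def intro: finite_subset)
  ultimately have "card (Pow (P - {x}) \<union> ?D) \<le> card (pileG F P)"
    by (intro card_mono) auto
  moreover have "finite ?D" using \<open>?D \<subseteq> pileG F P\<close> finite_G finite_subset by blast
  ultimately show ?thesis
    using assms(2,3) by (subst (asm) card_Un_disjoint) (auto simp: deg_def card_Pow)
qed

lemma crossing_pair_of_card_nbhd_gt:
  assumes "hereditary F" "finite P" "x \<in> P" "card P < card (nbhd F x)"
  shows "\<exists>y. {x, y} \<in> crossing F P"
proof -
  have "\<not> nbhd F x \<subseteq> P" using assms(2,4) card_mono leD by blast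
  then obtain A y where "A \<in> F" "x \<in> A" "y \<in> A" "y \<notin> P" by (auto simp: nbhd_def)
  then have "{x, y} \<in> F" using assms(1) by (auto intro: hereditaryD)
  then show ?thesis using assms(3) \<open>y \<notin> P\<close> by (auto simp: crossing_def)
qed

lemma card_le_two_mult_crossing_weight:
  assumes "finite F" "S \<subseteq> P" "\<And>x. x \<in> S \<Longrightarrow> \<exists>y. {x, y} \<in> crossing F P"
  shows "real (card S) \<le> 2 * crossing_weight F P"
proof (cases "finite S")
  case True
  obtain y where y: "\<And>x. x \<in> S \<Longrightarrow> {x, y x} \<in> crossing F P" using assms(3) by metis
  have y_notin: "y x \<notin> P" if "x \<in> S" for x
    using y[OF that] that assms(2) by (auto simp: crossing_def)
  have "inj_on (\<lambda>x. {x, y x}) S"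
    by (rule inj_onI) (metis assms(2) doubleton_eq_iff subsetD y_notin)
  have "real (card S) / 2 = (\<Sum>x\<in>S. share P {x, y x})"
  proof -
    have "share P {x, y x} = 1 / 2" if "x \<in> S" for x
    proof -
      from that assms(2) y_notin have "x \<in> P" "y x \<notin> P" by auto
      then have "{x, y x} \<inter> P = {x}" "x \<noteq> y x" by auto
      then show ?thesis by (simp add: share_def)
    qed
    then have "(\<Sum>x\<in>S. share P {x, y x}) = (\<Sum>x\<in>S. 1 / 2)" by (rule sum.cong[OF refl])
    then show ?thesis by simp
  qed
  also have "\<dots> = (\<Sum>A\<in>(\<lambda>x. {x, y x}) ` S. share P A)"
    using \<open>inj_on (\<lambda>x. {x, y x}) S\<close> by (simp add: sum.reindex)
  also have "\<dots> \<le> crossing_weight F P"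
    unfolding crossing_weight_def using assms(1) y
    by (intro sum_mono2) (auto simp: crossing_def share_nonneg)
  finally show ?thesis by simp
qed (simp add: crossing_weight_nonneg)

lemma two_power_le_card_pileM:
  assumes "hereditary F" "finite P" "M \<in> pileM F P"
  shows "2 ^ (card P - card M) \<le> card (pileM F P)"
proof -
  have "M \<subseteq> P" "M \<notin> F" using assms(3) by (auto simp: pileM_def pileG_def)
  then have "P - N \<notin> F" if "N \<subseteq> P - M" for N
    using hereditaryD[OF assms(1), of "P - N" M] that by blast
  then have "(\<lambda>N. P - N) ` Pow (P - M) \<subseteq> pileM F P"
    by (auto simp: pileM_def pileG_def)
  moreover have "inj_on (\<lambda>N. P - N) (Pow (P - M))" by (rule inj_onI) auto
  moreover have "finite (pileM F P)" using assms(2) by (simp add: pileM_def)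
  ultimately have "card (Pow (P - M)) \<le> card (pileM F P)"
    by (metis card_image card_mono)
  then show ?thesis
    using assms(2) \<open>M \<subseteq> P\<close> by (simp add: card_Pow card_Diff_subset finite_subset)
qed

lemma two_power_le_card_mult_crossing_weight:
  assumes "hereditary F" "finite F" "A \<in> crossing F P" "finite A"
  shows "real (2 ^ (card A - 2)) \<le> real (card A) * crossing_weight F P"
proof -
  obtain x y where xy: "x \<in> A" "x \<in> P" "y \<in> A" "y \<notin> P" and "A \<in> F"
    using assms(3) by (auto simp: crossing_def)
  let ?ext = "\<lambda>T. insert x (insert y T)"
  let ?E = "?ext ` Pow (A - {x, y})"
  have "?ext T \<in> F" if "T \<subseteq> A - {x, y}" for T
    using that xy by (intro hereditaryD[OF assms(1) \<open>A \<in> F\<close>]) auto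
  then have E_sub: "?E \<subseteq> crossing F P" using xy by (auto simp: crossing_def)
  have "inj_on ?ext (Pow (A - {x, y}))" by (rule inj_onI) blast
  moreover have "card {x, y} = 2" using xy by (metis card_2_iff)
  ultimately have card_E: "card ?E = 2 ^ (card A - 2)"
    using assms(4) xy by (simp add: card_image card_Pow card_Diff_subset)
  have "1 \<le> real (card A) * share P S" if "S \<in> ?E" for S
  proof -
    have "S \<subseteq> A" "x \<in> S \<inter> P" using that xy by auto
    then have "card S \<le> card A" "1 \<le> card (S \<inter> P)" "0 < card S"
      using assms(4) card_mono finite_subset[of S A] card_gt_0_iff[of S] card_gt_0_iff[of "S \<inter> P"]
      by (auto simp: Suc_le_eq)
    then have "real (card S * 1) \<le> real (card A * card (S \<inter> P))"
      by (intro of_nat_mono mult_le_mono)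
    then show ?thesis using \<open>0 < card S\<close> by (simp add: share_def field_simps)
  qed
  then have "real (card ?E) \<le> (\<Sum>S\<in>?E. real (card A) * share P S)"
    using sum_mono[of ?E "\<lambda>_. 1::real"] by simp
  also have "\<dots> = real (card A) * (\<Sum>S\<in>?E. share P S)" by (simp add: sum_distrib_left)
  also have "\<dots> \<le> real (card A) * crossing_weight F P"
    unfolding crossing_weight_def using E_sub assms(2)
    by (intro mult_left_mono sum_mono2) (auto simp: crossing_def share_nonneg)
  finally show ?thesis using card_E by simp
qed

locale light_pile =
  fixes d c :: nat and F :: "'a set set" and P :: "'a set"
  assumes d_ge: "50 \<le> d" and c_le_d: "c \<le> d"
    and finite_F: "finite F" and finite_members: "\<And>A. A \<in> F \<Longrightarrow> finite A"
    and hereditary: "hereditary F"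
    and finite_P: "finite P" and card_P: "card P = d"
    and P_subset_nbhd: "\<And>y. y \<in> P \<Longrightarrow> P \<subseteq> nbhd F y"
    and nbhd_center: "\<exists>z\<in>P. nbhd F z = P"
    and deg_ge: "\<And>x. x \<in> P \<Longrightarrow> 2 ^ (d - 1) - c + 1 \<le> deg F x"
    and sum_weight_less: "(\<Sum>x\<in>P. weight F x) < 2 ^ d - real c"
begin

abbreviation t :: nat where "t \<equiv> card (pileM F P)"

lemma two_power_eq: "(2::nat) ^ d = 2 * 2 ^ (d - 1)"
  using d_ge by (cases d) auto

lemma c_le_half_power: "c \<le> 2 ^ (d - 1)"
  using less_exp[of "d - 1"] c_le_d by linarith

lemma card_pileG_plus_t: "card (pileG F P) + t = 2 ^ d"
  using card_pileG_plus_card_pileM[OF finite_P] card_P by simp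

lemma crossing_weight_less: "crossing_weight F P < real t - real c + 1"
proof -
  have "real (card (pileG F P)) + real t = 2 ^ d"
    using arg_cong[OF card_pileG_plus_t, of real] by simp
  then show ?thesis using sum_weight_ge[OF finite_P finite_F] sum_weight_less by linarith
qed

lemma c_le_t: "c \<le> t"
  using crossing_weight_less crossing_weight_nonneg[of F P] by linarith

lemma t_le: "t + 2 \<le> 2 * c"
proof -
  obtain z where "z \<in> P" "nbhd F z = P" using nbhd_center by blast
  then show ?thesis
    using deg_ge[OF \<open>z \<in> P\<close>] two_mult_deg_le_card_pileG[OF hereditary finite_P \<open>nbhd F z = P\<close>]
      card_pileG_plus_t two_power_eq c_le_half_power by linarith
qed

lemma deg_pileG_ge:
  assumes "x \<in> P"
  shows "int (deg (pileG F P) x) \<ge> 2 ^ (d - 1) - 2 * int c + 2"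
proof -
  have "deg (pileM F P) x \<le> t"
    unfolding deg_def using finite_P by (intro card_mono) (auto simp: pileM_def)
  moreover have "int (deg (pileG F P) x) + int (deg (pileM F P) x) = 2 ^ (d - 1)"
    using arg_cong[OF deg_pileG_plus_deg_pileM[OF finite_P assms], of int] card_P by simp
  ultimately show ?thesis using t_le by linarith
qed

lemma bad_imp_singleton_mem_pileN:
  assumes "x \<in> P" "bad d F x"
  shows "{x} \<in> pileN F P"
proof -
  have "card (nbhd F x) = d" using assms(2) by (simp add: bad_def)
  then have "nbhd F x = P"
    using P_subset_nbhd[OF assms(1)] card_P d_ge
    by (metis card_subset_eq card.infinite not_numeral_le_zero)
  have "P - {x} \<notin> F"
  proof
    assume "P - {x} \<in> F"
    then have "2 ^ (d - 1) + deg F x \<le> card (pileG F P)"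
      using card_pileG_ge_of_compl_mem[OF hereditary finite_P assms(1) \<open>nbhd F x = P\<close>] card_P
      by simp
    then show False
      using deg_ge[OF assms(1)] card_pileG_plus_t two_power_eq c_le_half_power c_le_t by linarith
  qed
  then have "P - {x} \<in> pileM F P" by (auto simp: pileM_def pileG_def)
  moreover have "{x} = P - (P - {x})" using assms(1) by auto
  ultimately show ?thesis unfolding pileN_def by blast
qed

lemma pileM_member_large:
  assumes "M \<in> pileM F P"
  shows "8 * (d - card M) \<le> d"
  using two_power_le_card_pileM[OF hereditary finite_P assms] card_P t_le c_le_d d_ge
  by (intro eight_mult_le_of_two_power_less) auto

lemma crossing_member_small:
  assumes "A \<in> crossing F P"
  shows "4 * card A \<le> d"
proof -
  have "A \<in> F" "A \<noteq> {}" using assms by (auto simp: crossing_def)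
  then have "finite A" "0 < card A" using finite_members by (auto simp: card_gt_0_iff)
  have "real (2 ^ (card A - 2)) \<le> real (card A) * crossing_weight F P"
    using two_power_le_card_mult_crossing_weight[OF hereditary finite_F assms \<open>finite A\<close>] .
  also have "\<dots> < real (card A) * real d"
    using crossing_weight_less t_le c_le_d \<open>0 < card A\<close> by (intro mult_strict_left_mono) auto
  finally have "2 ^ (card A - 2) < card A * d" by (simp only: of_nat_mult [symmetric] of_nat_less_iff)
  then show ?thesis using d_ge by (rule four_mult_le_of_two_power_less)
qed

lemma t_bound: "7 * real t / 8 \<le> real c - 1 + crossing_weight F P / 4"
proof -
  have "real t * (7 * real d / 8) \<le> (\<Sum>M\<in>pileM F P. real (card M))"
  proof -
    have "7 * real d / 8 \<le> real (card M)" if "M \<in> pileM F P" for M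
      using pileM_member_large[OF that] by linarith
    then show ?thesis using sum_mono[of "pileM F P" "\<lambda>_. 7 * real d / 8"] by simp
  qed
  also have "\<dots> = (\<Sum>x\<in>P. real (deg (pileM F P) x))"
    using sum_deg_eq[OF finite_P, of "pileM F P"] finite_P
    by (simp add: pileM_def Int_absorb2 flip: of_nat_sum)
  also have "\<dots> \<le> (\<Sum>x\<in>P. real (deg (crossing F P) x) + (real c - 1))"
  proof (rule sum_mono)
    fix x assume "x \<in> P"
    have "deg (pileM F P) x + 1 \<le> deg (crossing F P) x + c"
      using deg_pileG_plus_deg_pileM[OF finite_P \<open>x \<in> P\<close>, of F, unfolded card_P] deg_ge[OF \<open>x \<in> P\<close>]
        deg_eq_deg_pileG_plus_deg_crossing[OF finite_F \<open>x \<in> P\<close>] c_le_half_power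
      by linarith
    then have "real (deg (pileM F P) x + 1) \<le> real (deg (crossing F P) x + c)" by (rule of_nat_mono)
    then show "real (deg (pileM F P) x) \<le> real (deg (crossing F P) x) + (real c - 1)" by simp
  qed
  also have "\<dots> = (\<Sum>A\<in>crossing F P. real (card (A \<inter> P))) + real d * (real c - 1)"
    using sum_deg_eq[OF finite_P, of "crossing F P"] finite_F card_P
    by (simp add: sum.distrib crossing_def flip: of_nat_sum)
  also have "(\<Sum>A\<in>crossing F P. real (card (A \<inter> P))) \<le> real d / 4 * crossing_weight F P"
  proof -
    have "real (card (A \<inter> P)) \<le> real d / 4 * share P A" if "A \<in> crossing F P" for A
    proof -
      have "A \<in> F" "A \<noteq> {}" using that by (auto simp: crossing_def)
      then have "0 < card A" using finite_members by (auto simp: card_gt_0_iff)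
      then have "real (card (A \<inter> P)) = share P A * real (card A)" by (simp add: share_def)
      also have "\<dots> \<le> share P A * (real d / 4)"
        using crossing_member_small[OF that] by (intro mult_left_mono) (auto simp: share_nonneg)
      finally show ?thesis by (simp add: mult.commute)
    qed
    then show ?thesis unfolding crossing_weight_def sum_distrib_left by (rule sum_mono)
  qed
  finally have "real d * (7 * real t / 8) \<le> real d * (real c - 1 + crossing_weight F P / 4)"
    by (simp add: algebra_simps)
  then show ?thesis using d_ge by simp
qed

lemma card_good_le: "real (card {x \<in> P. good d F x}) \<le> real d / 2 - 1"
proof -
  have "real (card {x \<in> P. good d F x}) \<le> 2 * crossing_weight F P"
    using finite_F
  proof (rule card_le_two_mult_crossing_weight)
    fix x assume "x \<in> {x \<in> P. good d F x}"
    then show "\<exists>y. {x, y} \<in> crossing F P"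
      using card_P by (intro crossing_pair_of_card_nbhd_gt[OF hereditary finite_P]) (auto simp: good_def)
  qed auto
  then show ?thesis using t_bound crossing_weight_less c_le_d d_ge by linarith
qed

end


theorem mainTheorem16:
  fixes n d c :: nat and F :: "nat set set" and P :: "nat set"
  assumes "d \<ge> 50" and "1 \<le> c" and "c \<le> d"
    and "F \<subseteq> Pow {1..n}" and "hereditary F"
    and "min_deg n F \<ge> 2 ^ (d - 1) - c + 1"
    and "isolated_pile n d F P"
    and "(\<Sum>x\<in>P. weight F x) < 2 ^ d - real c"
  shows "pile_t d F P \<ge> int c
    \<and> pile_t d F P \<le> 2 * int c - 2
    \<and> (\<forall>x\<in>P. int (deg (pileG F P) x) \<ge> 2 ^ (d - 1) - 2 * int c + 2)
    \<and> (\<forall>x\<in>P. bad d F x \<longrightarrow> {x} \<in> pileN F P)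
    \<and> real (card {x\<in>P. good d F x}) \<le> real d / 2 - 1"
proof -
  have pile: "P \<subseteq> {1..n}" "card P = d" "\<And>y. y \<in> P \<Longrightarrow> P \<subseteq> nbhd F y" "\<exists>z\<in>P. nbhd F z = P"
    using assms(7) by (auto simp: isolated_pile_def pile_def)
  have deg_ge: "2 ^ (d - 1) - c + 1 \<le> deg F x" if "x \<in> P" for x
  proof -
    have "min_deg n F \<le> deg F x" using that pile(1) unfolding min_deg_def by (intro Min_le) auto
    with assms(6) show ?thesis by linarith
  qed
  interpret light_pile d c F P
  proof
    show "finite F" using assms(4) by (rule finite_subset) simp
    show "finite A" if "A \<in> F" for A using that assms(4) by (auto intro: finite_subset)
    show "finite P" using pile(1) by (rule finite_subset) simp
  qed (use assms(1,3,5,8) pile(2-4) deg_ge in simp_all)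
  have "pile_t d F P = int t"
    using arg_cong[OF card_pileG_plus_t, of int] by (simp add: pile_t_def)
  then show ?thesis
    using c_le_t t_le deg_pileG_ge bad_imp_singleton_mem_pileN card_good_le by auto
qed

end
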